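(* Let $N\geq3$, $a_c=\frac{N-2}{2}$, $a<a_c$, assume either $b_{FS}(a)\leq b<a+1$ with $a<0$ or $a\leq b<a+1$ with $a\geq0$ and $a+b>0$, and let $\nu\geq2$. For nonnegative $v\in H^1(\mathcal{C})$ with $(\nu-\frac12)\Lambda<\|v\|^2_{H^1(\mathcal{C})}<(\nu+\frac12)\Lambda$, let $f=-\Delta_\theta v-\partial_t^2v+(a_c-a)^2v-v^p$, let $s_1<\dots<s_\nu$ be a point where $\min_{s_j}\|v-\sum_j\Psi_{s_j}\|_{H^1(\mathcal{C})}$ is attained, $Q=e^{-(a_c-a)\min_{i\neq j}|s_i-s_j|}$, $s_0=-\infty$, $s_{\nu+1}=+\infty$, and $E=(\sum_{j=1}^\nu\Psi_{s_j})^p-\sum_{j=1}^\nu\Psi_{s_j}^p$. Then: (i) if $1<p<3$, there exist $\delta>0$ and $C>0$ such that $\|f\|_{H^{-1}(\mathcal{C})}\leq\delta$ implies $$\|E\|_\natural:=\sum_{i=1}^\nu\sup_{t\in(\frac{s_i+s_{i-1}}{2},\frac{s_{i+1}+s_i}{2})}\frac{|E|}{Qe^{-(a_c-a)(p-2)|t-s_i|}}\leq C;$$ (ii) if $p\geq3$, then for every sufficiently small $\varsigma>0$ there exist $\delta>0$ and $C>0$ such that $\|f\|_{H^{-1}(\mathcal{C})}\leq\delta$ implies $$\|E\|_\sharp:=\sum_{i=1}^\nu\sup_{t\in(\frac{s_i+s_{i-1}}{2},\frac{s_{i+1}+s_i}{2})}\frac{|E|}{Qe^{-(1-\varsigma)(a_c-a)|t-s_i|}}\leq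 C.$$
   Context: $b_{FS}(a)=\frac{N(a_c-a)}{2\sqrt{(a_c-a)^2+(N-1)}}+a-a_c$, $p=\frac{N+2(1+a-b)}{N-2(1+a-b)}$. $\mathcal{C}=\mathbb{R}\times\mathbb{S}^{N-1}$ with coordinates $(t,\theta)$; $H^1(\mathcal{C})$ has inner product $\int_{\mathcal{C}}(\nabla w\cdot\nabla v+(a_c-a)^2wv)d\mu$, dual $H^{-1}(\mathcal{C})$; $f$ is the functional $\varphi\mapsto\langle v,\varphi\rangle_{H^1}-\int v^p\varphi$. $C_{a,b,N}^{-1}=\inf_{v\neq0}\|v\|^2_{H^1(\mathcal{C})}/\|v\|^2_{L^{p+1}(\mathcal{C})}$, $\Lambda=(C_{a,b,N}^{-1})^{\frac{p+1}{p-1}}$. $\Psi(t)=\big(\frac{(p+1)(a_c-a)^2}{2}\big)^{\frac{1}{p-1}}\big(\cosh(\frac{(a_c-a)(p-1)}{2}t)\big)^{-\frac{2}{p-1}}$, $\Psi_s(t)=\Psi(t-s)$. *)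

theory Defs
  imports "HOL-Analysis.Analysis"
begin

definition ac :: "nat \<Rightarrow> real" where
  "ac N = (real N - 2) / 2"

definition bFS :: "nat \<Rightarrow> real \<Rightarrow> real" where
  "bFS N a = real N * (ac N - a) / (2 * sqrt ((ac N - a)^2 + (real N - 1))) + a - ac N"

definition pexp :: "nat \<Rightarrow> real \<Rightarrow> real \<Rightarrow> real" where
  "pexp N a b = (real N + 2 * (1 + a - b)) / (real N - 2 * (1 + a - b))"

section \<open>The cylinder R x S^(N-1), N = CARD('n)\<close>

text \<open>Surface measure on the unit sphere of real^'n, via the cone formula
  sigma(A) = N * Lebesgue measure of the cone {r x. 0 < r < 1, x in A}.\<close>
definition sphere_measure :: "(real^'n) measure" where
  "sphere_measure =
     density (distr (restrict_space lborel (ball 0 1 - {0})) borel (\<lambda>x. x /\<^sub>R norm x))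
             (\<lambda>_. ennreal (real CARD('n)))"

definition cyl_measure :: "(real \<times> (real^'n)) measure" where
  "cyl_measure = lborel \<Otimes>\<^sub>M sphere_measure"

text \<open>C^1 functions with compact support in t (restricted to R x sphere they are
  exactly the C^1_c functions on the cylinder).\<close>
definition cyl_test :: "(real \<times> (real^'n) \<Rightarrow> real) \<Rightarrow> bool" where
  "cyl_test \<phi> \<longleftrightarrow>
     (\<exists>D. (\<forall>z. (\<phi> has_derivative blinfun_apply (D z)) (at z)) \<and> continuous_on UNIV D) \<and>
     (\<exists>R. \<forall>t x. R < \<bar>t\<bar> \<longrightarrow> \<phi> (t, x) = 0)"

definition cyl_dt :: "(real \<times> (real^'n) \<Rightarrow> real) \<Rightarrow> real \<times> (real^'n) \<Rightarrow> real" where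
  "cyl_dt \<phi> z = frechet_derivative \<phi> (at z) (1, 0)"

definition cyl_gradx :: "(real \<times> (real^'n) \<Rightarrow> real) \<Rightarrow> real \<times> (real^'n) \<Rightarrow> real^'n" where
  "cyl_gradx \<phi> z = (\<chi> i. frechet_derivative \<phi> (at z) (0, axis i 1))"

definition cyl_grad_theta :: "(real \<times> (real^'n) \<Rightarrow> real) \<Rightarrow> real \<times> (real^'n) \<Rightarrow> real^'n" where
  "cyl_grad_theta \<phi> z = cyl_gradx \<phi> z - (snd z \<bullet> cyl_gradx \<phi> z) *\<^sub>R snd z"

text \<open>H^1(C) inner product with weight m^2 = (a_c - a)^2, on test functions.\<close>
definition cyl_inner :: "real \<Rightarrow> (real \<times> (real^'n) \<Rightarrow> real) \<Rightarrow> (real \<times> (real^'n) \<Rightarrow> real) \<Rightarrow> real" where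
  "cyl_inner m \<phi> \<psi> = (\<integral>z. cyl_dt \<phi> z * cyl_dt \<psi> z + cyl_grad_theta \<phi> z \<bullet> cyl_grad_theta \<psi> z
                           + m^2 * \<phi> z * \<psi> z \<partial>cyl_measure)"

definition approx_seq :: "real \<Rightarrow> (real \<times> (real^'n) \<Rightarrow> real) \<Rightarrow> (nat \<Rightarrow> real \<times> (real^'n) \<Rightarrow> real) \<Rightarrow> bool" where
  "approx_seq m v \<phi> \<longleftrightarrow>
     (\<forall>k. cyl_test (\<phi> k)) \<and>
     ((\<lambda>k. \<integral>\<^sup>+ z. ennreal ((\<phi> k z - v z)^2) \<partial>cyl_measure) \<longlonglongrightarrow> 0) \<and>
     (\<forall>e>0. \<exists>K. \<forall>k\<ge>K. \<forall>l\<ge>K.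
         cyl_inner m (\<lambda>z. \<phi> k z - \<phi> l z) (\<lambda>z. \<phi> k z - \<phi> l z) < e)"

text \<open>H^1(C): completion of C^1_c(C) in the H^1 norm.\<close>
definition H1 :: "real \<Rightarrow> (real \<times> (real^'n) \<Rightarrow> real) set" where
  "H1 m = {v. v \<in> borel_measurable cyl_measure \<and> (\<exists>\<phi>. approx_seq m v \<phi>)}"

definition H1_inner :: "real \<Rightarrow> (real \<times> (real^'n) \<Rightarrow> real) \<Rightarrow> (real \<times> (real^'n) \<Rightarrow> real) \<Rightarrow> real" where
  "H1_inner m v w = lim (\<lambda>k. cyl_inner m ((SOME \<phi>. approx_seq m v \<phi>) k) ((SOME \<psi>. approx_seq m w \<psi>) k))"

definition H1_norm :: "real \<Rightarrow> (real \<times> (real^'n) \<Rightarrow> real) \<Rightarrow> real" where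
  "H1_norm m v = sqrt (H1_inner m v v)"

definition Lp_norm :: "real \<Rightarrow> (real \<times> (real^'n) \<Rightarrow> real) \<Rightarrow> real" where
  "Lp_norm q v = (\<integral>z. \<bar>v z\<bar> powr q \<partial>cyl_measure) powr (1 / q)"

text \<open>C_{a,b,N}^{-1}, with m = a_c - a and p the exponent.\<close>
definition Cinv :: "real \<Rightarrow> real \<Rightarrow> 'n::finite itself \<Rightarrow> real" where
  "Cinv m p _ = Inf {(H1_norm m v)^2 / (Lp_norm (p + 1) v)^2 | v :: real \<times> (real^'n) \<Rightarrow> real.
                       v \<in> H1 m \<and> \<not> (AE z in cyl_measure. v z = 0)}"

definition Lambda :: "real \<Rightarrow> real \<Rightarrow> 'n::finite itself \<Rightarrow> real" where
  "Lambda m p n = (Cinv m p n) powr ((p + 1) / (p - 1))"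

text \<open>H^{-1} norm of f = (phi |-> <v,phi>_{H^1} - int v^p phi).\<close>
definition f_dual_norm :: "real \<Rightarrow> real \<Rightarrow> (real \<times> (real^'n) \<Rightarrow> real) \<Rightarrow> ereal" where
  "f_dual_norm m p v = (SUP \<phi>\<in>{\<phi>. \<phi> \<in> H1 m \<and> H1_norm m \<phi> \<le> 1}.
        ereal \<bar>H1_inner m v \<phi> - (\<integral>z. v z powr p * \<phi> z \<partial>cyl_measure)\<bar>)"

definition Psi :: "real \<Rightarrow> real \<Rightarrow> real \<Rightarrow> real" where
  "Psi p m t = ((p + 1) * m^2 / 2) powr (1 / (p - 1)) * (cosh (m * (p - 1) / 2 * t)) powr (-2 / (p - 1))"

definition sumPsi :: "real \<Rightarrow> real \<Rightarrow> nat \<Rightarrow> (nat \<Rightarrow> real) \<Rightarrow> real \<times> (real^'n) \<Rightarrow> real" where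
  "sumPsi p m \<nu> s z = (\<Sum>j=1..\<nu>. Psi p m (fst z - s j))"

definition Eint :: "real \<Rightarrow> real \<Rightarrow> nat \<Rightarrow> (nat \<Rightarrow> real) \<Rightarrow> real \<Rightarrow> real" where
  "Eint p m \<nu> s t = (\<Sum>j=1..\<nu>. Psi p m (t - s j)) powr p - (\<Sum>j=1..\<nu>. (Psi p m (t - s j)) powr p)"

definition Qint :: "real \<Rightarrow> nat \<Rightarrow> (nat \<Rightarrow> real) \<Rightarrow> real" where
  "Qint m \<nu> s = exp (- m * Min {\<bar>s i - s j\<bar> | i j. i \<in> {1..\<nu>} \<and> j \<in> {1..\<nu>} \<and> i \<noteq> j})"

text \<open>((s_i + s_{i-1})/2, (s_{i+1} + s_i)/2) with s_0 = -infinity, s_{nu+1} = +infinity.\<close>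
definition cell :: "nat \<Rightarrow> (nat \<Rightarrow> real) \<Rightarrow> nat \<Rightarrow> real set" where
  "cell \<nu> s i = {t. (i = 1 \<or> (s i + s (i - 1)) / 2 < t) \<and> (i = \<nu> \<or> t < (s (i + 1) + s i) / 2)}"

text \<open>Weighted norm sum_i sup_{t in cell i} |E| / (Q e^{-w |t - s_i|});
  w = (a_c - a)(p - 2) gives the natural norm, w = (1 - varsigma)(a_c - a) the sharp one.\<close>
definition Enorm :: "real \<Rightarrow> real \<Rightarrow> nat \<Rightarrow> (nat \<Rightarrow> real) \<Rightarrow> real \<Rightarrow> ereal" where
  "Enorm p m \<nu> s w = (\<Sum>i=1..\<nu>. SUP t\<in>cell \<nu> s i.
        ereal (\<bar>Eint p m \<nu> s t\<bar> / (Qint m \<nu> s * exp (- w * \<bar>t - s i\<bar>))))"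

definition admissible :: "nat \<Rightarrow> real \<Rightarrow> real \<Rightarrow> nat \<Rightarrow> (real \<times> (real^'n) \<Rightarrow> real) \<Rightarrow> (nat \<Rightarrow> real) \<Rightarrow> bool" where
  "admissible N a b \<nu> v s \<longleftrightarrow>
     (let m = ac N - a; p = pexp N a b; \<Lambda> = Lambda m p TYPE('n) in
       v \<in> H1 m \<and> (\<forall>z. 0 \<le> v z) \<and>
       (real \<nu> - 1/2) * \<Lambda> < (H1_norm m v)^2 \<and> (H1_norm m v)^2 < (real \<nu> + 1/2) * \<Lambda> \<and>
       (\<forall>i\<in>{1..<\<nu>}. s i < s (i + 1)) \<and>
       (\<forall>s'. H1_norm m (\<lambda>z. v z - sumPsi p m \<nu> s z) \<le> H1_norm m (\<lambda>z. v z - sumPsi p m \<nu> s' z)))"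

end

theory Submission imports Defs begin

text \<open>The estimate holds for every ordered configuration s, whatever v is: of the
  hypotheses only m = a_c - a > 0 and the ordering of the s_j are used. Each bubble decays
  like e^{-m|t|}; on the i-th cell the centre s_i is the nearest one, while by the triangle
  inequality every other bubble is at most of size Q e^{m|t - s_i|} there. The elementary
  inequality |(sum_j f_j)^p - sum_j f_j^p| <= (p + 1) (sum_j f_j)^{p-1} sum_{j<>i} f_j
  then gives |E| <= C Q e^{-m(p-2)|t - s_i|} on that cell, and both weights of the theorem
  are at most m(p - 2), the sharp one because p >= 3.\<close>

definition Psi_decay_const :: "real \<Rightarrow> real \<Rightarrow> real" where
  "Psi_decay_const p m = ((p + 1) * m^2 / 2) powr (1 / (p - 1)) * 2 powr (2 / (p - 1))"

definition Eint_const :: "real \<Rightarrow> real \<Rightarrow> nat \<Rightarrow> real" where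
  "Eint_const p m \<nu> =
     (p + 1) * (real \<nu> * Psi_decay_const p m) powr (p - 1) * ((real \<nu> - 1) * Psi_decay_const p m)"

lemma Psi_decay_const_pos: "0 < m \<Longrightarrow> 1 < p \<Longrightarrow> 0 < Psi_decay_const p m"
  unfolding Psi_decay_const_def by simp

lemma Eint_const_nonneg: "0 < m \<Longrightarrow> 1 < p \<Longrightarrow> 1 \<le> \<nu> \<Longrightarrow> 0 \<le> Eint_const p m \<nu>"
  unfolding Eint_const_def using Psi_decay_const_pos[of m p] by simp

lemma exp_abs_le_2_cosh: "exp \<bar>x\<bar> \<le> 2 * cosh (x :: real)"
  unfolding cosh_def by (cases "x \<ge> 0") auto

lemma Psi_pos: "0 < m \<Longrightarrow> 1 < p \<Longrightarrow> 0 < Psi p m t"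
  unfolding Psi_def by simp

lemma Psi_le_exp:
  assumes "0 < m" "1 < p"
  shows "Psi p m t \<le> Psi_decay_const p m * exp (- m * \<bar>t\<bar>)"
proof -
  define x where "x = m * (p - 1) / 2 * t"
  have "cosh x powr (-2 / (p - 1)) \<le> (exp \<bar>x\<bar> / 2) powr (-2 / (p - 1))"
    using assms exp_abs_le_2_cosh[of x] by (intro powr_mono2') auto
  also have "\<dots> = exp (\<bar>x\<bar> * (-2 / (p - 1))) * 2 powr (2 / (p - 1))"
    by (simp add: powr_divide exp_powr_real powr_minus_divide) (simp add: exp_minus field_simps)
  also have "\<bar>x\<bar> * (-2 / (p - 1)) = - m * \<bar>t\<bar>"
    using assms by (simp add: x_def abs_mult)
  finally have "cosh x powr (-2 / (p - 1)) \<le> exp (- m * \<bar>t\<bar>) * 2 powr (2 / (p - 1))" .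
  then show ?thesis
    unfolding Psi_def Psi_decay_const_def x_def using assms
    by (simp add: ac_simps mult_left_mono)
qed

lemma powr_diff_le:
  fixes x u p :: real
  assumes "0 < x" "x \<le> u" "1 \<le> p"
  shows "u powr p - x powr p \<le> p * u powr (p - 1) * (u - x)"
proof (cases "x = u")
  case False
  with assms have "x < u" by simp
  moreover have "\<forall>z. x \<le> z \<and> z \<le> u \<longrightarrow> ((\<lambda>z. z powr p) has_real_derivative p * z powr (p - 1)) (at z)"
    using assms by (auto intro!: has_real_derivative_powr)
  ultimately obtain z where z: "x < z" "z < u" "u powr p - x powr p = (u - x) * (p * z powr (p - 1))"
    using MVT2[of x u "\<lambda>z. z powr p" "\<lambda>z. p * z powr (p - 1)"] by blast
  have "z powr (p - 1) \<le> u powr (p - 1)"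
    using z assms by (intro powr_mono2) auto
  with z assms show ?thesis by (simp add: ac_simps mult_left_mono)
qed simp

lemma powr_sum_minus_sum_powr_le:
  fixes f :: "'a \<Rightarrow> real"
  assumes "finite I" "i \<in> I" "\<And>j. j \<in> I \<Longrightarrow> 0 < f j" "1 \<le> p"
  shows "\<bar>(\<Sum>j\<in>I. f j) powr p - (\<Sum>j\<in>I. f j powr p)\<bar>
           \<le> (p + 1) * (\<Sum>j\<in>I. f j) powr (p - 1) * (\<Sum>j\<in>I - {i}. f j)"
proof -
  define u where "u = (\<Sum>j\<in>I. f j)"
  define y where "y = (\<Sum>j\<in>I - {i}. f j)"
  have y: "0 \<le> y" unfolding y_def by (intro sum_nonneg) (auto intro: less_imp_le assms(3))
  have u: "u = f i + y" unfolding u_def y_def using assms(1,2) by (simp add: sum.remove)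
  have fi: "0 < f i" using assms(2,3) by simp
  have powr_sum: "(\<Sum>j\<in>I. f j powr p) = f i powr p + (\<Sum>j\<in>I - {i}. f j powr p)"
    using assms(1,2) by (simp add: sum.remove)
  have main_le: "u powr p - f i powr p \<le> p * u powr (p - 1) * y"
    using powr_diff_le[of "f i" u p] fi y u assms(4) by simp
  have main_ge: "f i powr p \<le> u powr p"
    using fi y u assms(4) by (intro powr_mono2) auto
  have "f j powr p \<le> u powr (p - 1) * f j" if j: "j \<in> I - {i}" for j
  proof -
    have fj: "0 < f j" using j assms(3) by simp
    have "f j \<le> y" unfolding y_def using assms(1,3) j by (intro member_le_sum) (auto simp: less_imp_le)
    then have "f j powr (p - 1) \<le> u powr (p - 1)"
      using fj u fi assms(4) by (intro powr_mono2) auto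
    moreover have "f j powr p = f j powr (p - 1) * f j"
      using fj by (simp add: powr_diff)
    ultimately show ?thesis using fj by (simp add: mult_right_mono)
  qed
  then have rest_le: "(\<Sum>j\<in>I - {i}. f j powr p) \<le> u powr (p - 1) * y"
    unfolding y_def sum_distrib_left by (rule sum_mono)
  have rest_ge: "0 \<le> (\<Sum>j\<in>I - {i}. f j powr p)" by (simp add: sum_nonneg)
  have "0 \<le> u powr (p - 1) * y" using y by simp
  with main_le main_ge rest_le rest_ge show ?thesis
    unfolding powr_sum u_def[symmetric] y_def[symmetric] by (simp add: abs_le_iff algebra_simps)
qed

lemma cell_nearest_centre:
  assumes ordered: "\<forall>k\<in>{1..<\<nu>}. s k < s (k + 1)"
    and i: "i \<in> {1..\<nu>}" and j: "j \<in> {1..\<nu>}" and t: "t \<in> cell \<nu> s i"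
  shows "\<bar>t - s i\<bar> \<le> \<bar>t - s j\<bar>"
proof -
  have le: "s k \<le> s l" if "1 \<le> k" "k \<le> l" "l \<le> \<nu>" for k l
  proof (rule lift_Suc_mono_le_ivl[of "{1..<\<nu>}" s])
    show "s n \<le> s (Suc n)" if "n \<in> {1..<\<nu>}" for n
      using ordered that by (simp add: less_imp_le)
  qed (use that in auto)
  consider "j = i" | "i < j" | "j < i" by linarith
  then show ?thesis
  proof cases
    case 2
    then have "t < (s (i + 1) + s i) / 2" using j t by (auto simp: cell_def)
    moreover have "s i \<le> s (i + 1)" "s (i + 1) \<le> s j" using i j 2 by (auto intro!: le)
    ultimately show ?thesis by (simp add: abs_if)
  next
    case 3
    then have "(s i + s (i - 1)) / 2 < t" using j t by (auto simp: cell_def)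
    moreover have "s (i - 1) \<le> s i" "s j \<le> s (i - 1)" using i j 3 by (auto intro!: le)
    ultimately show ?thesis by (simp add: abs_if)
  qed simp
qed

lemma exp_dist_le_Qint:
  assumes "i \<in> {1..\<nu>}" "j \<in> {1..\<nu>}" "i \<noteq> j" "0 < m"
  shows "exp (- m * \<bar>s i - s j\<bar>) \<le> Qint m \<nu> s"
proof -
  let ?D = "{\<bar>s i - s j\<bar> | i j. i \<in> {1..\<nu>} \<and> j \<in> {1..\<nu>} \<and> i \<noteq> j}"
  have "?D \<subseteq> (\<lambda>(i, j). \<bar>s i - s j\<bar>) ` ({1..\<nu>} \<times> {1..\<nu>})" by auto
  then have "finite ?D" by (rule finite_subset) auto
  moreover have "\<bar>s i - s j\<bar> \<in> ?D" using assms by blast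
  ultimately have "Min ?D \<le> \<bar>s i - s j\<bar>" by simp
  then show ?thesis unfolding Qint_def using assms(4) by simp
qed

lemma Psi_shift_le_Qint:
  assumes "i \<in> {1..\<nu>}" "j \<in> {1..\<nu>}" "i \<noteq> j" "0 < m" "1 < p"
  shows "Psi p m (t - s j) \<le> Psi_decay_const p m * (Qint m \<nu> s * exp (m * \<bar>t - s i\<bar>))"
proof -
  have "m * \<bar>s i - s j\<bar> \<le> m * (\<bar>t - s i\<bar> + \<bar>t - s j\<bar>)"
    using assms(4) by (intro mult_left_mono) auto
  then have "exp (- m * \<bar>t - s j\<bar>) \<le> exp (- m * \<bar>s i - s j\<bar>) * exp (m * \<bar>t - s i\<bar>)"
    by (simp add: exp_add[symmetric] algebra_simps)
  also have "\<dots> \<le> Qint m \<nu> s * exp (m * \<bar>t - s i\<bar>)"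
    using exp_dist_le_Qint[OF assms(1-4)] by simp
  finally show ?thesis
    using Psi_le_exp[OF assms(4,5), of "t - s j"] Psi_decay_const_pos[OF assms(4,5)]
    by (meson mult_left_mono order.trans less_imp_le)
qed

lemma Eint_le_on_cell:
  assumes m: "0 < m" and p: "1 < p" and ordered: "\<forall>k\<in>{1..<\<nu>}. s k < s (k + 1)"
    and i: "i \<in> {1..\<nu>}" and t: "t \<in> cell \<nu> s i"
  shows "\<bar>Eint p m \<nu> s t\<bar> \<le> Eint_const p m \<nu> * Qint m \<nu> s * exp (- (m * (p - 2)) * \<bar>t - s i\<bar>)"
proof -
  define P where "P j = Psi p m (t - s j)" for j
  define B where "B = Psi_decay_const p m"
  define Q where "Q = Qint m \<nu> s"
  define r where "r = \<bar>t - s i\<bar>"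
  have P_pos: "0 < P j" for j unfolding P_def using Psi_pos[OF m p] .
  have sum_P_pos: "0 < (\<Sum>j=1..\<nu>. P j)"
    using i P_pos by (intro sum_pos) auto
  have "P j \<le> B * exp (- m * r)" if "j \<in> {1..\<nu>}" for j
  proof -
    have "P j \<le> B * exp (- m * \<bar>t - s j\<bar>)"
      unfolding P_def B_def by (rule Psi_le_exp[OF m p])
    also have "\<dots> \<le> B * exp (- m * r)"
      using cell_nearest_centre[OF ordered i that t] m Psi_decay_const_pos[OF m p]
      by (simp add: r_def B_def)
    finally show ?thesis .
  qed
  then have "(\<Sum>j=1..\<nu>. P j) \<le> real \<nu> * (B * exp (- m * r))"
    using sum_bounded_above[of "{1..\<nu>}" P "B * exp (- m * r)"] by simp
  then have "(\<Sum>j=1..\<nu>. P j) powr (p - 1) \<le> (real \<nu> * (B * exp (- m * r))) powr (p - 1)"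
    using sum_P_pos p by (intro powr_mono2) auto
  also have "\<dots> = (real \<nu> * B) powr (p - 1) * exp (- m * (p - 1) * r)"
    using Psi_decay_const_pos[OF m p] by (simp add: B_def powr_mult exp_powr_real ac_simps)
  finally have sum_le: "(\<Sum>j=1..\<nu>. P j) powr (p - 1) \<le> (real \<nu> * B) powr (p - 1) * exp (- m * (p - 1) * r)" .
  have "P j \<le> B * (Q * exp (m * r))" if "j \<in> {1..\<nu>} - {i}" for j
    using Psi_shift_le_Qint[OF i _ _ m p] that unfolding P_def B_def Q_def r_def by auto
  then have others_le: "(\<Sum>j\<in>{1..\<nu>} - {i}. P j) \<le> (real \<nu> - 1) * (B * (Q * exp (m * r)))"
    using sum_bounded_above[of "{1..\<nu>} - {i}" P] i by (simp add: of_nat_diff)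
  have "\<bar>Eint p m \<nu> s t\<bar> \<le> (p + 1) * (\<Sum>j=1..\<nu>. P j) powr (p - 1) * (\<Sum>j\<in>{1..\<nu>} - {i}. P j)"
    unfolding Eint_def P_def[symmetric]
    using powr_sum_minus_sum_powr_le[of "{1..\<nu>}" i P p] i P_pos p by simp
  also have "\<dots> \<le> (p + 1) * ((real \<nu> * B) powr (p - 1) * exp (- m * (p - 1) * r))
                   * ((real \<nu> - 1) * (B * (Q * exp (m * r))))"
    using p by (intro mult_mono mult_left_mono sum_le others_le) (auto intro: sum_nonneg less_imp_le P_pos)
  also have "\<dots> = Eint_const p m \<nu> * Q * (exp (- m * (p - 1) * r) * exp (m * r))"
    by (simp add: Eint_const_def B_def ac_simps)
  also have "exp (- m * (p - 1) * r) * exp (m * r) = exp (- (m * (p - 2)) * r)"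
    by (simp add: exp_add[symmetric] algebra_simps)
  finally show ?thesis unfolding Q_def r_def .
qed

lemma Enorm_le:
  assumes m: "0 < m" and p: "1 < p" and ordered: "\<forall>k\<in>{1..<\<nu>}. s k < s (k + 1)"
    and w: "w \<le> m * (p - 2)"
  shows "Enorm p m \<nu> s w \<le> ereal (real \<nu> * Eint_const p m \<nu>)"
proof -
  have "(SUP t\<in>cell \<nu> s i. ereal (\<bar>Eint p m \<nu> s t\<bar> / (Qint m \<nu> s * exp (- w * \<bar>t - s i\<bar>))))
          \<le> ereal (Eint_const p m \<nu>)" if i: "i \<in> {1..\<nu>}" for i
  proof (rule SUP_least)
    fix t assume t: "t \<in> cell \<nu> s i"
    have Q: "0 < Qint m \<nu> s" unfolding Qint_def by simp
    have "\<bar>Eint p m \<nu> s t\<bar> \<le> Eint_const p m \<nu> * Qint m \<nu> s * exp (- (m * (p - 2)) * \<bar>t - s i\<bar>)"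
      by (rule Eint_le_on_cell[OF m p ordered i t])
    also have "\<dots> \<le> Eint_const p m \<nu> * Qint m \<nu> s * exp (- w * \<bar>t - s i\<bar>)"
      using Eint_const_nonneg[OF m p, of \<nu>] i Q w
      by (intro mult_left_mono) (auto intro: mult_right_mono)
    finally show "ereal (\<bar>Eint p m \<nu> s t\<bar> / (Qint m \<nu> s * exp (- w * \<bar>t - s i\<bar>)))
                    \<le> ereal (Eint_const p m \<nu>)"
      using Q by (simp add: pos_divide_le_eq ac_simps)
  qed
  then have "Enorm p m \<nu> s w \<le> (\<Sum>i=1..\<nu>. ereal (Eint_const p m \<nu>))"
    unfolding Enorm_def by (rule sum_mono)
  then show ?thesis by simp
qed

lemma admissible_ordered: "admissible N a b \<nu> v s \<Longrightarrow> \<forall>k\<in>{1..<\<nu>}. s k < s (k + 1)"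
  unfolding admissible_def Let_def by blast

theorem lemma5p4:
  fixes N \<nu> :: nat and a b :: real
  assumes "CARD('n) = N" and "N \<ge> 3"
    and "a < ac N"
    and "(bFS N a \<le> b \<and> b < a + 1 \<and> a < 0) \<or> (a \<le> b \<and> b < a + 1 \<and> 0 \<le> a \<and> 0 < a + b)"
    and "\<nu> \<ge> 2"
  shows "(1 < pexp N a b \<and> pexp N a b < 3 \<longrightarrow>
            (\<exists>\<delta>>0. \<exists>C>0. \<forall>(v :: real \<times> (real^'n) \<Rightarrow> real) s.
               admissible N a b \<nu> v s \<longrightarrow>
               f_dual_norm (ac N - a) (pexp N a b) v \<le> ereal \<delta> \<longrightarrow>
               Enorm (pexp N a b) (ac N - a) \<nu> s ((ac N - a) * (pexp N a b - 2)) \<le> ereal C))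
       \<and> (3 \<le> pexp N a b \<longrightarrow>
            (\<exists>vs0>0. \<forall>vs. 0 < vs \<and> vs < vs0 \<longrightarrow>
              (\<exists>\<delta>>0. \<exists>C>0. \<forall>(v :: real \<times> (real^'n) \<Rightarrow> real) s.
                 admissible N a b \<nu> v s \<longrightarrow>
                 f_dual_norm (ac N - a) (pexp N a b) v \<le> ereal \<delta> \<longrightarrow>
                 Enorm (pexp N a b) (ac N - a) \<nu> s ((1 - vs) * (ac N - a)) \<le> ereal C)))"
proof -
  define m where "m = ac N - a"
  define p where "p = pexp N a b"
  define C where "C = real \<nu> * Eint_const p m \<nu> + 1"
  have m: "0 < m" using assms(3) by (simp add: m_def)
  have C: "0 < C" if "1 < p"
    using Eint_const_nonneg[OF m that, of \<nu>] assms(5) by (simp add: C_def add_nonneg_pos)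
  have uniform: "\<exists>\<delta>>0. \<exists>C>0. \<forall>(v :: real \<times> (real^'n) \<Rightarrow> real) s. admissible N a b \<nu> v s \<longrightarrow>
                   f_dual_norm m p v \<le> ereal \<delta> \<longrightarrow> Enorm p m \<nu> s w \<le> ereal C"
    if p: "1 < p" and w: "w \<le> m * (p - 2)" for w
  proof -
    have "Enorm p m \<nu> s w \<le> ereal C" if "admissible N a b \<nu> (v :: real \<times> (real^'n) \<Rightarrow> real) s" for v s
      using Enorm_le[OF m p admissible_ordered[OF that] w] by (rule order.trans) (simp add: C_def)
    with C[OF p] show ?thesis using zero_less_one by blast
  qed
  have sharp_weight: "(1 - vs) * m \<le> m * (p - 2)" if "3 \<le> p" "0 < vs" for vs
  proof -
    have "m * 3 \<le> m * p" "0 < m * vs" using that m by auto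
    then show ?thesis by (simp add: algebra_simps)
  qed
  show ?thesis
    unfolding m_def[symmetric] p_def[symmetric]
    using uniform sharp_weight by (intro conjI impI) (auto intro!: exI[of _ "1::real"])
qed

end
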